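(* Let $f\in\mathbf{SB}_n$ be nonconstant. Then $\deg(f)\ge 2^{\lceil\log_2\mathcal{AI}(f)\rceil}=2^{\lfloor\log_2(2\mathcal{AI}(f)-1)\rfloor}$.
   Context: $\mathbf{SB}_n$ is the set of symmetric Boolean functions on $n$ variables; $\deg$ is the algebraic degree. The algebraic immunity is $\mathcal{AI}(f)=\min\{\deg(g): g\neq0,\ gf=0 \text{ or } g(f+1)=0\}$. *)

theory Defs
  imports Complex_Main
begin

text \<open>A Boolean function on n variables is modelled as a predicate on subsets of
  the index set {..<n}: an input vector x in F_2^n is identified with its support
  (the set of coordinates equal to 1). Only the values on subsets of {..<n} matter.\<close>

type_synonym bfun = "nat set \<Rightarrow> bool"

text \<open>Evaluation of an algebraic normal form with coefficient predicate c
  (c S means the monomial prod_{i in S} x_i occurs) at input x, over GF(2).\<close>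
definition anf_eval :: "nat \<Rightarrow> (nat set \<Rightarrow> bool) \<Rightarrow> nat set \<Rightarrow> bool" where
  "anf_eval n c x = odd (card {S. S \<subseteq> {..<n} \<and> c S \<and> S \<subseteq> x})"

definition deg_le :: "nat \<Rightarrow> bfun \<Rightarrow> nat \<Rightarrow> bool" where
  "deg_le n f d \<longleftrightarrow> (\<exists>c. (\<forall>S. S \<subseteq> {..<n} \<and> c S \<longrightarrow> card S \<le> d) \<and>
                        (\<forall>x. x \<subseteq> {..<n} \<longrightarrow> f x = anf_eval n c x))"

definition bdeg :: "nat \<Rightarrow> bfun \<Rightarrow> nat" where
  "bdeg n f = (LEAST d. deg_le n f d)"

definition nonzero_bf :: "nat \<Rightarrow> bfun \<Rightarrow> bool" where
  "nonzero_bf n g \<longleftrightarrow> (\<exists>x. x \<subseteq> {..<n} \<and> g x)"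

definition prod_zero :: "nat \<Rightarrow> bfun \<Rightarrow> bfun \<Rightarrow> bool" where
  "prod_zero n g h \<longleftrightarrow> (\<forall>x. x \<subseteq> {..<n} \<longrightarrow> \<not> (g x \<and> h x))"

definition AI :: "nat \<Rightarrow> bfun \<Rightarrow> nat" where
  "AI n f = (LEAST d. \<exists>g. nonzero_bf n g \<and> bdeg n g = d \<and>
                          (prod_zero n g f \<or> prod_zero n g (\<lambda>x. \<not> f x)))"

definition symmetric_bf :: "nat \<Rightarrow> bfun \<Rightarrow> bool" where
  "symmetric_bf n f \<longleftrightarrow> (\<forall>x y. x \<subseteq> {..<n} \<and> y \<subseteq> {..<n} \<and> card x = card y \<longrightarrow> f x = f y)"

definition nonconstant_bf :: "nat \<Rightarrow> bfun \<Rightarrow> bool" where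
  "nonconstant_bf n f \<longleftrightarrow> (\<exists>x y. x \<subseteq> {..<n} \<and> y \<subseteq> {..<n} \<and> f x \<noteq> f y)"

end

theory Submission imports Defs begin

(* Let f be symmetric and nonconstant with algebraic degree D, and
   choose t with 2^t \<le> D < 2^(t+1); put h = 2^t.  The ANF of a function of degree
   below the dimension of a subcube has no top monomial on it, so the function takes
   the value True an even number of times on every subcube of dimension > deg.
   Write F(w) for the value of f on inputs of weight w.  For a symmetric function on
   a subcube of dimension 2^(t+1) this count is, modulo 2,
   F(a) + F(a + 2^(t+1)) (Lucas: all inner binomials C(2^(t+1), j) are even), so the
   weight profile F of f is 2h-periodic.  Conversely (Moebius inversion) a symmetric
   function whose profile is h-periodic or h-antiperiodic has degree \<le> h.  From the
   2h-periodic profile of f we build such a function that annihilates f or f + 1,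
   whence AI(f) \<le> 2^t, i.e. 2^\<lceil>log2 AI(f)\<rceil> \<le> 2^t \<le> D. *)

section \<open>Subcubes of the Boolean cube\<close>

definition cube :: "nat set \<Rightarrow> nat set \<Rightarrow> nat set set" where
  "cube A B = {z. A \<subseteq> z \<and> z \<subseteq> B}"

lemma finite_cube: "finite B \<Longrightarrow> finite (cube A B)"
  unfolding cube_def by (rule finite_subset[of _ "Pow B"]) auto

lemma cube_image: "A \<subseteq> B \<Longrightarrow> cube A B = (\<lambda>y. A \<union> y) ` Pow (B - A)"
  unfolding cube_def
proof (intro set_eqI iffI)
  fix z assume "A \<subseteq> B" "z \<in> {z. A \<subseteq> z \<and> z \<subseteq> B}"
  hence "z = A \<union> (z - A)" "z - A \<in> Pow (B - A)" by auto
  thus "z \<in> (\<lambda>y. A \<union> y) ` Pow (B - A)" by blast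
qed auto

lemma inj_on_union_Pow: "inj_on (\<lambda>y. A \<union> y) (Pow (B - A))"
  by (auto simp: inj_on_def)

lemma card_cube: "finite B \<Longrightarrow> A \<subseteq> B \<Longrightarrow> card (cube A B) = 2 ^ card (B - A)"
  by (simp add: cube_image card_image[OF inj_on_union_Pow] card_Pow)

lemma card_cube_split:
  assumes "finite B" "A \<subseteq> B" "i \<in> B" "i \<notin> A"
  shows "card {z\<in>cube A B. g z} = card {z\<in>cube A (B - {i}). g z} + card {z\<in>cube (insert i A) B. g z}"
proof -
  have "{z\<in>cube A B. g z} = {z\<in>cube A (B - {i}). g z} \<union> {z\<in>cube (insert i A) B. g z}"
    using assms by (auto simp: cube_def)
  moreover have "finite {z\<in>cube A (B - {i}). g z}" "finite {z\<in>cube (insert i A) B. g z}"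
    using assms finite_cube by auto
  ultimately show ?thesis
    by (subst card_Un_disjoint[symmetric]) (auto simp: cube_def)
qed

lemma card_symmetric_on_cube:
  assumes "finite B" "A \<subseteq> B" "\<And>z. z \<in> cube A B \<Longrightarrow> g z = G (card z)"
  shows "card {z\<in>cube A B. g z} =
    (\<Sum>j\<le>card (B - A). if G (card A + j) then card (B - A) choose j else 0)"
proof -
  let ?R = "B - A"
  have fA: "finite A" and fR: "finite ?R" using assms finite_subset by auto
  have layer: "g (A \<union> y) = G (card A + card y)" if "y \<subseteq> ?R" for y
  proof -
    have "A \<union> y \<in> cube A B" using that assms(2) by (auto simp: cube_def)
    moreover have "card (A \<union> y) = card A + card y"
      using that fA fR by (subst card_Un_disjoint) (auto intro: finite_subset)
    ultimately show ?thesis using assms(3) by simp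
  qed
  have "{z\<in>cube A B. g z} = (\<lambda>y. A \<union> y) ` {y\<in>Pow ?R. g (A \<union> y)}"
    unfolding cube_image[OF assms(2)] by blast
  also have "{y\<in>Pow ?R. g (A \<union> y)} = {y. y \<subseteq> ?R \<and> G (card A + card y)}"
    using layer by auto
  finally have "card {z\<in>cube A B. g z} = card ((\<lambda>y. A \<union> y) ` {y. y \<subseteq> ?R \<and> G (card A + card y)})"
    by simp
  also have "\<dots> = card {y. y \<subseteq> ?R \<and> G (card A + card y)}"
    by (rule card_image, rule inj_on_subset[OF inj_on_union_Pow]) auto
  also have "{y. y \<subseteq> ?R \<and> G (card A + card y)} =
     (\<Union>j\<in>{j. j \<le> card ?R \<and> G (card A + j)}. {y. y \<subseteq> ?R \<and> card y = j})"
    using fR by (auto intro: card_mono)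
  also have "card \<dots> = (\<Sum>j\<in>{j. j \<le> card ?R \<and> G (card A + j)}. card {y. y \<subseteq> ?R \<and> card y = j})"
    by (rule card_UN_disjoint) (auto intro: finite_subset[of _ "Pow ?R"] fR)
  also have "\<dots> = (\<Sum>j\<in>{j. j \<le> card ?R \<and> G (card A + j)}. card ?R choose j)"
    using n_subsets[OF fR] by simp
  also have "\<dots> = (\<Sum>j\<le>card ?R. if G (card A + j) then card ?R choose j else 0)"
    by (simp add: sum.If_cases Collect_conj_eq atMost_def Int_commute)
  finally show ?thesis .
qed

lemma even_choose_pow2:
  assumes "0 < j" "j < 2^k" shows "even ((2::nat)^k choose j)"
proof (rule ccontr)
  assume odd: "odd ((2::nat)^k choose j)"
  have "j * (2^k choose j) = 2^k * ((2^k - 1) choose (j - 1))"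
    using times_binomial_minus1_eq[OF assms(1)] by simp
  hence "(2::nat)^k dvd j * (2^k choose j)" by simp
  moreover have "coprime ((2::nat)^k) (2^k choose j)" using odd by simp
  ultimately have "(2::nat)^k dvd j" using coprime_dvd_mult_left_iff by blast
  with assms show False by (simp add: nat_dvd_not_less)
qed

text \<open>On a subcube of dimension 2^k only the two extreme layers count modulo 2.\<close>
lemma parity_symmetric_on_pow2_cube:
  assumes "finite B" "A \<subseteq> B" "card (B - A) = 2^k"
    and "\<And>z. z \<in> cube A B \<Longrightarrow> g z = G (card z)"
  shows "even (card {z\<in>cube A B. g z}) \<longleftrightarrow> (G (card A) \<longleftrightarrow> G (card A + 2^k))"
proof -
  define N :: nat where "N = 2^k"
  define c where "c = (\<lambda>j. if G (card A + j) then N choose j else 0)"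
  have "card {z\<in>cube A B. g z} = (\<Sum>j\<le>N. c j)"
    using card_symmetric_on_cube[of B A g G, OF assms(1,2) assms(4)] unfolding assms(3) c_def N_def .
  also have "\<dots> = c 0 + c N + (\<Sum>j\<in>{..N} - {0,N}. c j)"
    by (subst sum.subset_diff[of "{0,N}"]) (auto simp: N_def)
  finally have count: "card {z\<in>cube A B. g z} = c 0 + c N + (\<Sum>j\<in>{..N} - {0,N}. c j)" .
  have "even (\<Sum>j\<in>{..N} - {0,N}. c j)"
  proof (rule dvd_sum)
    fix j assume "j \<in> {..N} - {0,N}"
    hence "0 < j" "j < 2^k" by (auto simp: N_def)
    thus "even (c j)" using even_choose_pow2 by (simp add: c_def N_def)
  qed
  thus ?thesis unfolding count by (simp add: c_def N_def)
qed

section \<open>Algebraic normal form and parities on subcubes\<close>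

lemma double_count:
  assumes "finite X" "finite Y"
  shows "(\<Sum>x\<in>X. card {y\<in>Y. R x y}) = (\<Sum>y\<in>Y. card {x\<in>X. R x y})"
proof -
  have "(\<Sum>x\<in>X. card {y\<in>Y. R x y}) = (\<Sum>x\<in>X. \<Sum>y\<in>Y. if R x y then 1 else 0)"
    using assms by (simp add: sum.If_cases Int_def)
  also have "\<dots> = (\<Sum>y\<in>Y. \<Sum>x\<in>X. if R x y then 1 else 0)" by (rule sum.swap)
  also have "\<dots> = (\<Sum>y\<in>Y. card {x\<in>X. R x y})"
    using assms by (simp add: sum.If_cases Int_def)
  finally show ?thesis .
qed

text \<open>A function of degree at most d is True an even number of times on every
  subcube of dimension greater than d (each monomial of degree \<le> d is).\<close>
lemma deg_le_even_on_cube: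
  assumes "deg_le n g d" "A \<subseteq> B" "B \<subseteq> {..<n}" "d < card (B - A)"
  shows "even (card {z\<in>cube A B. g z})"
proof -
  obtain c where deg_c: "\<And>S. S \<subseteq> {..<n} \<Longrightarrow> c S \<Longrightarrow> card S \<le> d"
    and anf_c: "\<And>x. x \<subseteq> {..<n} \<Longrightarrow> g x = anf_eval n c x"
    using assms(1) unfolding deg_le_def by blast
  define M where "M = {S. S \<subseteq> {..<n} \<and> c S}"
  have fM: "finite M" unfolding M_def by (rule finite_subset[of _ "Pow {..<n}"]) auto
  have fB: "finite B" using assms(3) finite_subset by blast
  have fC: "finite (cube A B)" using finite_cube[OF fB] .
  have "g z = odd (card {S\<in>M. S \<subseteq> z})" if "z \<in> cube A B" for z
  proof -
    have "z \<subseteq> {..<n}" using that assms(3) by (auto simp: cube_def)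
    thus ?thesis using anf_c by (simp add: anf_eval_def M_def conj_assoc)
  qed
  hence "{z\<in>cube A B. g z} = {z\<in>cube A B. odd (card {S\<in>M. S \<subseteq> z})}" by auto
  hence "even (card {z\<in>cube A B. g z}) \<longleftrightarrow> even (\<Sum>z\<in>cube A B. card {S\<in>M. S \<subseteq> z})"
    using even_sum_iff[OF fC, of "\<lambda>z. card {S\<in>M. S \<subseteq> z}"] by simp
  also have "(\<Sum>z\<in>cube A B. card {S\<in>M. S \<subseteq> z}) = (\<Sum>S\<in>M. card {z\<in>cube A B. S \<subseteq> z})"
    by (rule double_count[OF fC fM])
  finally have parity: "even (card {z\<in>cube A B. g z}) \<longleftrightarrow> even (\<Sum>S\<in>M. card {z\<in>cube A B. S \<subseteq> z})" .
  have "even (card {z\<in>cube A B. S \<subseteq> z})" if S: "S \<in> M" for S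
  proof (cases "S \<subseteq> B")
    case False
    hence "{z\<in>cube A B. S \<subseteq> z} = {}" by (auto simp: cube_def)
    thus ?thesis by (simp only: card.empty even_zero)
  next
    case True
    hence sub: "{z\<in>cube A B. S \<subseteq> z} = cube (A \<union> S) B" by (auto simp: cube_def)
    have "card (B - A) \<le> card ((B - (A \<union> S)) \<union> S)"
      using fB True by (intro card_mono) (auto intro: finite_subset)
    also have "\<dots> \<le> card (B - (A \<union> S)) + card S" by (rule card_Un_le)
    finally have "card (B - A) \<le> card (B - (A \<union> S)) + card S" .
    moreover have "card S \<le> d" using S deg_c by (auto simp: M_def)
    ultimately have "card (B - (A \<union> S)) > 0" using assms(4) by linarith
    thus ?thesis unfolding sub using card_cube[OF fB] True assms(2) by (simp add: dvd_power)
  qed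
  hence "even (\<Sum>S\<in>M. card {z\<in>cube A B. S \<subseteq> z})" by (rule dvd_sum)
  with parity show ?thesis by simp
qed

text \<open>Conversely, the ANF coefficient of the monomial x_S is the parity of g on the
  subcube below S (Moebius inversion); if all these vanish above d, deg g \<le> d.\<close>
lemma even_on_cubes_deg_le:
  assumes "\<And>S. S \<subseteq> {..<n} \<Longrightarrow> d < card S \<Longrightarrow> even (card {z\<in>cube {} S. g z})"
  shows "deg_le n g d"
  unfolding deg_le_def
proof (intro exI conjI allI impI)
  define c where "c = (\<lambda>S. odd (card {z\<in>cube {} S. g z}))"
  show "card S \<le> d" if "S \<subseteq> {..<n} \<and> c S" for S
    using that assms[of S] unfolding c_def by (meson not_le)
  fix x assume x: "x \<subseteq> {..<n}"
  have fx: "finite x" using x finite_subset by blast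
  have fC: "finite (cube {} x)" using finite_cube[OF fx] .
  have "{S. S \<subseteq> {..<n} \<and> c S \<and> S \<subseteq> x} = {S\<in>cube {} x. odd (card {z\<in>cube {} x. g z \<and> z \<subseteq> S})}"
  proof -
    have "{z\<in>cube {} S. g z} = {z\<in>cube {} x. g z \<and> z \<subseteq> S}" if "S \<subseteq> x" for S
      using that by (auto simp: cube_def)
    thus ?thesis using x by (auto simp: c_def cube_def)
  qed
  hence "anf_eval n c x \<longleftrightarrow> odd (\<Sum>S\<in>cube {} x. card {z\<in>cube {} x. g z \<and> z \<subseteq> S})"
    unfolding anf_eval_def
    using even_sum_iff[OF fC, of "\<lambda>S. card {z\<in>cube {} x. g z \<and> z \<subseteq> S}"] by simp
  also have "(\<Sum>S\<in>cube {} x. card {z\<in>cube {} x. g z \<and> z \<subseteq> S})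
      = (\<Sum>z\<in>cube {} x. card {S\<in>cube {} x. g z \<and> z \<subseteq> S})"
    by (rule double_count[OF fC fC])
  also have "\<dots> = (\<Sum>z\<in>cube {} x. if g z then 2 ^ card (x - z) else 0)"
  proof (rule sum.cong[OF refl])
    fix z assume z: "z \<in> cube {} x"
    have "{S\<in>cube {} x. g z \<and> z \<subseteq> S} = (if g z then cube z x else {})"
      by (auto simp: cube_def)
    thus "card {S\<in>cube {} x. g z \<and> z \<subseteq> S} = (if g z then 2 ^ card (x - z) else 0)"
      using card_cube[OF fx, of z] z by (auto simp: cube_def)
  qed
  also have "odd \<dots> \<longleftrightarrow> odd (card {z\<in>cube {} x. odd (if g z then 2 ^ card (x - z) else 0::nat)})"
    using even_sum_iff[OF fC, of "\<lambda>z. if g z then 2 ^ card (x - z) else 0::nat"] by simp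
  also have "{z\<in>cube {} x. odd (if g z then 2 ^ card (x - z) else 0::nat)} = (if g x then {x} else {})"
  proof -
    have "card (x - z) = 0 \<longleftrightarrow> z = x" if "z \<subseteq> x" for z
      using that fx by (auto intro: finite_subset)
    thus ?thesis by (auto simp: cube_def)
  qed
  finally show "g x = anf_eval n c x" by simp
qed

lemma card_le_n: "x \<subseteq> {..<n} \<Longrightarrow> card x \<le> n"
  using card_mono[of "{..<n}" x] by simp

lemma deg_le_n: "deg_le n g n"
  by (rule even_on_cubes_deg_le) (use card_le_n not_le in blast)

lemma bdeg_spec: "deg_le n g (bdeg n g)"
  unfolding bdeg_def by (rule LeastI[of _ n]) (rule deg_le_n)

lemma bdeg_le_n: "bdeg n g \<le> n"
  unfolding bdeg_def by (rule Least_le) (rule deg_le_n)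

lemma deg_le_0_const:
  assumes "deg_le n g 0" "x \<subseteq> {..<n}" "y \<subseteq> {..<n}"
  shows "g x = g y"
proof -
  obtain c where deg_c: "\<And>S. S \<subseteq> {..<n} \<Longrightarrow> c S \<Longrightarrow> card S \<le> 0"
    and anf_c: "\<And>x. x \<subseteq> {..<n} \<Longrightarrow> g x = anf_eval n c x"
    using assms(1) unfolding deg_le_def by blast
  have "S = {}" if "S \<subseteq> {..<n}" "c S" for S
    using deg_c[OF that] that(1) by (meson card_0_eq finite_lessThan finite_subset le_zero_eq)
  hence "{S. S \<subseteq> {..<n} \<and> c S \<and> S \<subseteq> z} = (if c {} then {{}} else {})" for z
    by auto
  thus ?thesis using anf_c assms(2,3) by (simp add: anf_eval_def)
qed

section \<open>Symmetric functions with (anti)periodic weight profile\<close>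

text \<open>If the profile G is 2^k-periodic or 2^k-antiperiodic, the symmetric function
  G(|x|) is True an even number of times on every subcube of dimension > 2^k:
  split off coordinates down to dimension 2^k + 1, where the two halves have equal
  parity by the extreme-layer formula.\<close>
lemma even_on_cube_periodic_symmetric:
  assumes h: "h = 2^k" and per: "(\<forall>a. G (a + h) = G a) \<or> (\<forall>a. G (a + h) = (\<not> G a))"
  shows "finite B \<Longrightarrow> A \<subseteq> B \<Longrightarrow> card (B - A) = m \<Longrightarrow> h < m \<Longrightarrow>
      even (card {z\<in>cube A B. G (card z)})"
proof (induction m arbitrary: A B)
  case 0 thus ?case by simp
next
  case (Suc m)
  have "B - A \<noteq> {}"
  proof
    assume "B - A = {}"
    with Suc.prems(3) show False by simp
  qed
  then obtain i where i: "i \<in> B" "i \<notin> A" by auto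
  have fA: "finite A" using Suc.prems(1,2) finite_subset by blast
  have "card ((B - A) - {i}) = m" using Suc.prems(3) i by (simp add: card_Diff_singleton)
  moreover have "(B - {i}) - A = (B - A) - {i}" "B - insert i A = (B - A) - {i}" by auto
  ultimately have dim_lower: "card ((B - {i}) - A) = m" and dim_upper: "card (B - insert i A) = m"
    by simp_all
  have lower: "A \<subseteq> B - {i}" "finite (B - {i})" and upper: "insert i A \<subseteq> B"
    using Suc.prems(1,2) i by auto
  note split = card_cube_split[OF Suc.prems(1,2) i, of "\<lambda>z. G (card z)"]
  show ?case
  proof (cases "h < m")
    case True
    thus ?thesis unfolding split
      using Suc.IH[OF lower(2,1) dim_lower] Suc.IH[OF Suc.prems(1) upper dim_upper] by simp
  next
    case False
    hence m: "m = 2^k" using Suc.prems(4) h by simp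
    have lower_parity: "even (card {z\<in>cube A (B - {i}). G (card z)}) \<longleftrightarrow> (G (card A) \<longleftrightarrow> G (card A + h))"
      using parity_symmetric_on_pow2_cube[OF lower(2,1), of k "\<lambda>z. G (card z)" G] dim_lower m h
      by simp
    have upper_parity: "even (card {z\<in>cube (insert i A) B. G (card z)})
        \<longleftrightarrow> (G (card A + 1) \<longleftrightarrow> G (card A + 1 + h))"
      using parity_symmetric_on_pow2_cube[OF Suc.prems(1) upper, of k "\<lambda>z. G (card z)" G]
        dim_upper m h fA i(2) by simp
    have "G (card A + h) = G (card A) \<and> G (card A + 1 + h) = G (card A + 1) \<or>
        G (card A + h) = (\<not> G (card A)) \<and> G (card A + 1 + h) = (\<not> G (card A + 1))"
      using per by blast
    hence "(G (card A) \<longleftrightarrow> G (card A + h)) \<longleftrightarrow> (G (card A + 1) \<longleftrightarrow> G (card A + 1 + h))"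
      by blast
    thus ?thesis unfolding split even_add lower_parity upper_parity .
  qed
qed

lemma deg_le_periodic_symmetric:
  assumes "h = 2^k" and "(\<forall>a. G (a + h) = G a) \<or> (\<forall>a. G (a + h) = (\<not> G a))"
  shows "deg_le n (\<lambda>x. G (card x)) h"
proof (rule even_on_cubes_deg_le)
  fix S assume S: "S \<subseteq> {..<n}" "h < card S"
  have "finite S" using S(1) finite_subset by blast
  thus "even (card {z\<in>cube {} S. G (card z)})"
    using even_on_cube_periodic_symmetric[OF assms, of S "{}" "card S"] S(2) by simp
qed

section \<open>Periodicity of symmetric functions of low degree\<close>

lemma symmetric_weight:
  assumes "symmetric_bf n f" "x \<subseteq> {..<n}"
  shows "f x = f {..<card x}"
proof -
  have "{..<card x} \<subseteq> {..<n}" using card_le_n[OF assms(2)] by auto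
  moreover have "card {..<card x} = card x" by simp
  ultimately show ?thesis using assms unfolding symmetric_bf_def by blast
qed

lemma symmetric_profile_step:
  assumes sym: "symmetric_bf n f" and "deg_le n f d" "d < 2^k" "a + 2^k \<le> n"
  shows "f {..<a} = f {..<a + 2^k}"
proof -
  have sub: "{..<a} \<subseteq> {..<a + 2^k}" "{..<a + 2^k} \<subseteq> {..<n}" using assms(4) by auto
  have dim: "card ({..<a + 2^k} - {..<a}) = 2^k" by simp
  have "even (card {z\<in>cube {..<a} {..<a + 2^k}. f z})"
    using deg_le_even_on_cube[OF assms(2) sub] dim assms(3) by simp
  moreover have "f z = f {..<card z}" if "z \<in> cube {..<a} {..<a + 2^k}" for z
    using that sub(2) by (intro symmetric_weight[OF sym]) (auto simp: cube_def)
  ultimately show ?thesis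
    using parity_symmetric_on_pow2_cube[OF _ sub(1) dim, of f "\<lambda>w. f {..<w}"] by simp
qed

lemma periodic_upto_mod:
  fixes p n :: nat
  assumes "0 < p" "\<And>a. a + p \<le> n \<Longrightarrow> F a = F (a + p)"
  shows "w \<le> n \<Longrightarrow> F w = F (w mod p)"
proof (induction w rule: less_induct)
  case (less w)
  show ?case
  proof (cases "w < p")
    case False
    hence "F w = F (w - p)" using assms(2)[of "w - p"] less.prems by simp
    also have "\<dots> = F ((w - p) mod p)" using less assms(1) False by simp
    finally show ?thesis using False by (simp add: le_mod_geq)
  qed simp
qed

lemma symmetric_low_degree_profile:
  assumes "symmetric_bf n f" "deg_le n f d" "d < 2^k" "x \<subseteq> {..<n}"
  shows "f x = f {..<card x mod 2^k}"
  using periodic_upto_mod[of "2^k" n "\<lambda>w. f {..<w}"] symmetric_profile_step[OF assms(1-3)]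
    symmetric_weight[OF assms(1,4)] card_le_n[OF assms(4)] by simp

section \<open>Annihilators and the algebraic immunity\<close>

lemma periodic_2h_repr:
  fixes F :: "nat \<Rightarrow> 'a" and h :: nat
  assumes "\<And>w. F (w + 2*h) = F w"
  shows "F w = (if even (w div h) then F (w mod h) else F (w mod h + h))"
proof -
  have "F (b + 2*h*q) = F b" for b q
  proof (induction q)
    case (Suc q)
    have "b + 2*h*Suc q = (b + 2*h*q) + 2*h" by simp
    thus ?case by (simp only: assms Suc.IH)
  qed simp
  from this[of "w mod (2*h)" "w div (2*h)"] have "F w = F (w mod (2*h))" by simp
  also have "w mod (2*h) = h * (w div h mod 2) + w mod h"
    using mod_mult2_eq[of w h 2] by (simp add: mult.commute)
  finally show ?thesis by (auto simp: even_iff_mod_2_eq_zero odd_iff_mod_2_eq_one add.commute)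
qed

lemma AI_le:
  assumes "nonzero_bf n g" "deg_le n g d" "prod_zero n g f \<or> prod_zero n g (\<lambda>x. \<not> f x)"
  shows "AI n f \<le> d"
proof -
  have "AI n f \<le> bdeg n g" unfolding AI_def by (rule Least_le) (use assms in blast)
  also have "bdeg n g \<le> d" unfolding bdeg_def by (rule Least_le) (rule assms(2))
  finally show ?thesis .
qed

text \<open>A nonconstant function has no annihilator of degree 0.\<close>
lemma AI_pos:
  assumes "nonconstant_bf n f" shows "1 \<le> AI n f"
proof -
  obtain x y where xy: "x \<subseteq> {..<n}" "y \<subseteq> {..<n}" "f x \<noteq> f y"
    using assms unfolding nonconstant_bf_def by blast
  let ?P = "\<lambda>d. \<exists>g. nonzero_bf n g \<and> bdeg n g = d \<and> (prod_zero n g f \<or> prod_zero n g (\<lambda>x. \<not> f x))"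
  have "nonzero_bf n f" using xy unfolding nonzero_bf_def by (cases "f x") auto
  moreover have "prod_zero n f (\<lambda>x. \<not> f x)" unfolding prod_zero_def by simp
  ultimately have "?P (bdeg n f)" by blast
  hence "?P (AI n f)" unfolding AI_def by (rule LeastI)
  then obtain g where g: "nonzero_bf n g" "bdeg n g = AI n f"
    "prod_zero n g f \<or> prod_zero n g (\<lambda>x. \<not> f x)" by blast
  show ?thesis
  proof (rule ccontr)
    assume "\<not> 1 \<le> AI n f"
    hence "bdeg n g = 0" using g(2) by simp
    hence "deg_le n g 0" using bdeg_spec[of n g] by simp
    moreover obtain z where z: "z \<subseteq> {..<n}" "g z" using g(1) unfolding nonzero_bf_def by blast
    ultimately have "g x" "g y" using deg_le_0_const[OF _ z(1)] xy(1,2) by blast+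
    thus False using g(3) xy unfolding prod_zero_def by blast
  qed
qed

text \<open>The key construction: a nonconstant function whose weight profile F is
  2h-periodic (h = 2^t \<le> n) has a nonzero annihilator of degree \<le> h, for f or f + 1.
  If F(r) = F(r + h) for some r < h, take the indicator of |x| = r (mod h);
  otherwise F is h-antiperiodic and f itself has degree \<le> h.\<close>
lemma periodic_symmetric_annihilator:
  assumes h: "h = 2^t" "h \<le> n"
    and profile: "\<And>x. x \<subseteq> {..<n} \<Longrightarrow> f x = F (card x)"
    and per: "\<And>w. F (w + 2*h) = F w"
    and nc: "nonconstant_bf n f"
  obtains g where "nonzero_bf n g" "deg_le n g h" "prod_zero n g f \<or> prod_zero n g (\<lambda>x. \<not> f x)"
proof (cases "\<exists>r<h. F (r + h) = F r")
  case True
  then obtain r where r: "r < h" "F (r + h) = F r" by blast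
  let ?g = "\<lambda>x. card x mod h = r"
  have "deg_le n (\<lambda>x. (\<lambda>w. w mod h = r) (card x)) h"
    by (rule deg_le_periodic_symmetric[OF h(1)]) simp
  moreover have "nonzero_bf n ?g"
    unfolding nonzero_bf_def using r(1) h(2) by (intro exI[of _ "{..<r}"]) auto
  moreover have "f x = F r" if "x \<subseteq> {..<n}" "?g x" for x
    using periodic_2h_repr[of F h "card x", OF per] profile[OF that(1)] that(2) r(2) by simp
  hence "prod_zero n ?g f \<or> prod_zero n ?g (\<lambda>x. \<not> f x)"
    unfolding prod_zero_def by (cases "F r") auto
  ultimately show ?thesis using that by simp
next
  case False
  have h0: "0 < h" using h(1) by simp
  have anti: "\<forall>w. F (w + h) = (\<not> F w)"
  proof
    fix w
    have "(w + h) mod h = w mod h" "(w + h) div h = w div h + 1" using h0 by simp_all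
    moreover have "F (w mod h + h) \<noteq> F (w mod h)" using False h0 by simp
    ultimately show "F (w + h) = (\<not> F w)"
      using periodic_2h_repr[of F h w, OF per] periodic_2h_repr[of F h "w + h", OF per] by auto
  qed
  have "deg_le n (\<lambda>x. F (card x)) h" by (rule deg_le_periodic_symmetric[OF h(1)]) (use anti in blast)
  moreover have "nonzero_bf n (\<lambda>x. F (card x))"
  proof -
    obtain x y where xy: "x \<subseteq> {..<n}" "y \<subseteq> {..<n}" "f x \<noteq> f y"
      using nc unfolding nonconstant_bf_def by blast
    hence "F (card x) \<or> F (card y)" using profile by auto
    thus ?thesis using xy unfolding nonzero_bf_def by blast
  qed
  moreover have "prod_zero n (\<lambda>x. F (card x)) (\<lambda>x. \<not> f x)"
    using profile unfolding prod_zero_def by simp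
  ultimately show ?thesis using that by blast
qed

lemma symmetric_AI_le:
  assumes sym: "symmetric_bf n f" and nc: "nonconstant_bf n f"
    and deg: "deg_le n f d" "d < 2^(t+1)" and "2^t \<le> n"
  shows "AI n f \<le> 2^t"
proof -
  define F where "F = (\<lambda>w. f {..<w mod 2^(t+1)})"
  have "f x = F (card x)" if "x \<subseteq> {..<n}" for x
    unfolding F_def by (rule symmetric_low_degree_profile[OF sym deg that])
  moreover have "F (w + 2 * 2^t) = F w" for w by (simp add: F_def)
  ultimately obtain g where "nonzero_bf n g" "deg_le n g (2^t)"
      "prod_zero n g f \<or> prod_zero n g (\<lambda>x. \<not> f x)"
    using periodic_symmetric_annihilator[OF refl assms(5) _ _ nc] by blast
  thus ?thesis by (rule AI_le)
qed

lemma ceiling_log2_le: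
  assumes "1 \<le> a" "a \<le> (2::nat)^t"
  shows "nat \<lceil>log 2 (real a)\<rceil> \<le> t"
proof (cases "a = 1")
  case False
  then obtain k where k: "2^k < a" "a \<le> (2::nat)^(k+1)" using ex_power_ivl2[of 2 a] assms by auto
  have "\<lceil>log (real 2) (real a)\<rceil> = int k + 1" by (rule ceiling_log_nat_eq_if[OF k]) simp
  moreover have "k < t" using k assms(2)
    by (metis less_le_trans nat_power_less_imp_less zero_less_numeral)
  ultimately show ?thesis by simp
qed simp

lemma ceiling_log2_eq_floor_log2:
  assumes "1 \<le> a"
  shows "nat \<lceil>log 2 (real a)\<rceil> = nat \<lfloor>log 2 (2 * real a - 1)\<rfloor>"
proof (cases "a = 1")
  case False
  then obtain k where k: "2^k < a" "a \<le> (2::nat)^(k+1)" using ex_power_ivl2[of 2 a] assms by auto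
  have "\<lceil>log (real 2) (real a)\<rceil> = int k + 1" by (rule ceiling_log_nat_eq_if[OF k]) simp
  moreover have "\<lfloor>log (real 2) (real (2*a - 1))\<rfloor> = int (k+1)"
    by (rule floor_log_nat_eq_if) (use k in auto)
  moreover have "real (2*a - 1) = 2 * real a - 1" using assms by simp
  ultimately show ?thesis by simp
qed simp

theorem corollary8:
  fixes n :: nat and f :: bfun
  assumes "symmetric_bf n f" and "nonconstant_bf n f"
  shows "bdeg n f \<ge> 2 ^ nat \<lceil>log 2 (real (AI n f))\<rceil>
    \<and> (2::nat) ^ nat \<lceil>log 2 (real (AI n f))\<rceil>
        = 2 ^ nat \<lfloor>log 2 (2 * real (AI n f) - 1)\<rfloor>"
proof -
  define D where "D = bdeg n f"
  obtain x y where xy: "x \<subseteq> {..<n}" "y \<subseteq> {..<n}" "f x \<noteq> f y"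
    using assms(2) unfolding nonconstant_bf_def by blast
  have "\<not> deg_le n f 0" using deg_le_0_const[OF _ xy(1,2)] xy(3) by blast
  hence "D \<noteq> 0" using bdeg_spec[of n f] unfolding D_def by (intro notI) simp
  then obtain t where t: "2^t \<le> D" "D < (2::nat)^(t+1)" using ex_power_ivl1[of 2 D] by auto
  have "2^t \<le> n" using t(1) bdeg_le_n[of n f] unfolding D_def by linarith
  hence "AI n f \<le> 2^t"
    using symmetric_AI_le[OF assms bdeg_spec t(2)[unfolded D_def]] by blast
  hence "nat \<lceil>log 2 (real (AI n f))\<rceil> \<le> t" using ceiling_log2_le AI_pos[OF assms(2)] by blast
  hence "(2::nat) ^ nat \<lceil>log 2 (real (AI n f))\<rceil> \<le> D"
    using t(1) power_increasing[of _ t "2::nat"] by (meson le_trans one_le_numeral)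
  thus ?thesis using ceiling_log2_eq_floor_log2[OF AI_pos[OF assms(2)]] unfolding D_def by simp
qed

end
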